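(* Let a skew fibration of $\mathbb R^n$ by oriented affine $k$-planes be given, with $U\subset G_k(n)$ the set of oriented linear planes parallel to its fibers and, for $u\in U$, $(u,v(u))$ the fiber parallel to $u$. Let $(u_n,v_n)$, $v_n=v(u_n)$, be a sequence of fibers with $u_n$ converging to a point of $\overline U\setminus U$, and suppose (after passing to a subsequence) that the great $k$-spheres $S_{(u_n,v_n)}$ converge to a great $k$-sphere $S$. Then $S$ is contained in the equator $S^{n-1}$ and $S$ is disjoint from $L$.
   Context: Identify $\mathbb R^n$ with the hyperplane $\{x_{n+1}=1\}\subset\mathbb R^{n+1}$, tangent to the unit sphere $S^n$ at the north pole. For an affine plane $P=(u,v)$ (with $u$ the parallel oriented linear plane and $v\in u^\perp$ its point nearest the origin), $\alpha(P)$ is the linear span of $P\times\{1\}$ in $\mathbb R^{n+1}$ and $S_{(u,v)}=S^n\cap\alpha(P)$, a great $k$-sphere; convergence of great spheres means convergence of the corresponding linear $(k+1)$-planes in the Grassmannian. The equator $S^{n-1}=S^n\cap\{x_{n+1}=0\}$ is identified with the unit sphere of $\mathbb R^n$, and $L=\bigcup_{u\in U}(u\cap S^{n-1})$ is the set of oriented directions contained in fibers. A fibration is skew if its fibers are pairwise disjoint oriented affine $k$-planes covering $\mathbb R^n$, varying continuously, no two of which contain parallel lines. *)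

theory Defs
  imports "HOL-Analysis.Analysis"
begin

text \<open>Oriented linear k-planes in R^n (R^n = real^'n, k = CARD('k)) are represented
  as equivalence classes of ordered orthonormal k-frames: two frames represent the same
  oriented plane iff they span the same subspace and the change-of-frame matrix has
  positive determinant.\<close>

definition orthonormal_frame :: "('k::finite \<Rightarrow> 'a::euclidean_space) \<Rightarrow> bool" where
  "orthonormal_frame F \<longleftrightarrow> (\<forall>i j. F i \<bullet> F j = (if i = j then 1 else 0))"

definition oplane_of :: "('k::finite \<Rightarrow> 'a::euclidean_space) \<Rightarrow> ('k \<Rightarrow> 'a) set" where
  "oplane_of F = {G. orthonormal_frame G \<and> span (range G) = span (range F)
                     \<and> det ((\<chi> i j. F i \<bullet> G j) :: real^'k^'k) > 0}"

definition is_oplane :: "('k::finite \<Rightarrow> 'a::euclidean_space) set \<Rightarrow> bool" where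
  "is_oplane u \<longleftrightarrow> (\<exists>F. orthonormal_frame F \<and> u = oplane_of F)"

definition lin :: "('k::finite \<Rightarrow> 'a::euclidean_space) set \<Rightarrow> 'a set" where
  "lin u = {x. \<exists>F\<in>u. x \<in> span (range F)}"

text \<open>convergence in the oriented Grassmannian (quotient topology of the Stiefel manifold)\<close>
definition oplane_tendsto ::
  "(nat \<Rightarrow> ('k::finite \<Rightarrow> 'a::euclidean_space) set) \<Rightarrow> ('k \<Rightarrow> 'a) set \<Rightarrow> bool" where
  "oplane_tendsto us u \<longleftrightarrow>
     (\<exists>Fs F. (\<forall>m. Fs m \<in> us m) \<and> F \<in> u \<and> (\<forall>i. (\<lambda>m. Fs m i) \<longlonglongrightarrow> F i))"

definition aff :: "('k::finite \<Rightarrow> 'a::euclidean_space) set \<times> 'a \<Rightarrow> 'a set" where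
  "aff P = (\<lambda>x. snd P + x) ` lin (fst P)"

definition skew_fibration ::
  "(('k::finite \<Rightarrow> 'a::euclidean_space) set \<times> 'a) set \<Rightarrow> bool" where
  "skew_fibration Fib \<longleftrightarrow>
     (\<forall>P\<in>Fib. is_oplane (fst P) \<and> (\<forall>x\<in>lin (fst P). snd P \<bullet> x = 0))
   \<and> (\<forall>P\<in>Fib. \<forall>Q\<in>Fib. P \<noteq> Q \<longrightarrow> aff P \<inter> aff Q = {})
   \<and> (\<forall>x. \<exists>P\<in>Fib. x \<in> aff P)
   \<and> (\<forall>x xs P Ps. xs \<longlonglongrightarrow> x \<longrightarrow> P \<in> Fib \<longrightarrow> x \<in> aff P
        \<longrightarrow> (\<forall>m. Ps m \<in> Fib \<and> xs m \<in> aff (Ps m))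
        \<longrightarrow> oplane_tendsto (\<lambda>m. fst (Ps m)) (fst P) \<and> (\<lambda>m. snd (Ps m)) \<longlonglongrightarrow> snd P)
   \<and> (\<forall>P\<in>Fib. \<forall>Q\<in>Fib. P \<noteq> Q \<longrightarrow> lin (fst P) \<inter> lin (fst Q) = {0})"

definition alpha :: "('k::finite \<Rightarrow> 'a::euclidean_space) set \<times> 'a \<Rightarrow> ('a \<times> real) set" where
  "alpha P = span ((\<lambda>x. (x, 1)) ` aff P)"

definition onb :: "nat \<Rightarrow> (nat \<Rightarrow> 'a::euclidean_space) \<Rightarrow> 'a set \<Rightarrow> bool" where
  "onb d B W \<longleftrightarrow> (\<forall>i<d. \<forall>j<d. B i \<bullet> B j = (if i = j then 1 else 0)) \<and> span (B ` {..<d}) = W"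

definition grass_tendsto :: "nat \<Rightarrow> (nat \<Rightarrow> 'a::euclidean_space set) \<Rightarrow> 'a set \<Rightarrow> bool" where
  "grass_tendsto d Ws W \<longleftrightarrow>
     (\<exists>Bs B. (\<forall>m. onb d (Bs m) (Ws m)) \<and> onb d B W \<and> (\<forall>i<d. (\<lambda>m. Bs m i) \<longlonglongrightarrow> B i))"

definition equator :: "('a::euclidean_space \<times> real) set" where
  "equator = sphere 0 1 \<inter> {p. snd p = 0}"

end

theory Submission
  imports Defs "HOL-Homology.Invariance_of_Domain"
begin

text \<open>The punctured spaces alpha P - {0} of the fibers P are pairwise disjoint, because the fibers
  are pairwise disjoint and no two of them contain parallel lines.

  No compact set meets infinitely many of the fibers (u_m, v_m): a convergent subsequence of
  points on them would, by continuity of the fibration, make u_m converge to the direction of the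
  fiber through the limit point, and limits in the oriented Grassmannian are unique, so ubar would
  lie in U. Hence |v_m| tends to infinity. A unit vector (y + t v_m, t) of alpha (u_m, v_m), with
  y orthogonal to v_m, has |t| \<le> 1 / |v_m|, so the limit W is horizontal.

  Now let x be a unit vector in a fiber Q and suppose (x, 0) \<in> W. Let d run over the affine slice
  through the base point of Q orthogonal to Q, w over the vectors of Q orthogonal to x, and let
  pi_d be the orthogonal projection onto the direction of the fiber through d. Projecting
  (pi_d (x + w) + t d, t), a point of alpha of the fiber through d, centrally to the hyperplane
  tangent to the unit sphere at (x, 0) gives a continuous map, injective near the base point
  because transversality to Q persists there. Source and target both have dimension n, so by
  invariance of domain its image contains a neighbourhood of (x, 0). Points of alpha (u_m, v_m)
  close to (x, 0) therefore lie in alpha of fibers through a compact set of points; these fibers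
  are the (u_m, v_m) themselves, which contradicts the first step.\<close>

definition orthonormal_on :: "'i set \<Rightarrow> ('i \<Rightarrow> 'a::real_inner) \<Rightarrow> bool" where
  "orthonormal_on I B \<longleftrightarrow> (\<forall>i\<in>I. \<forall>j\<in>I. B i \<bullet> B j = (if i = j then 1 else 0))"

lemma orthonormal_frame_iff: "orthonormal_frame F \<longleftrightarrow> orthonormal_on UNIV F"
  by (simp add: orthonormal_frame_def orthonormal_on_def)

lemma onb_iff: "onb d B W \<longleftrightarrow> orthonormal_on {..<d} B \<and> span (B ` {..<d}) = W"
  by (simp add: onb_def orthonormal_on_def Ball_def)

lemma orthonormal_span_eq_sum:
  fixes B :: "'i \<Rightarrow> 'a::euclidean_space"
  assumes fin: "finite I" and on: "orthonormal_on I B" and y: "y \<in> span (B ` I)"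
  shows "y = (\<Sum>i\<in>I. (y \<bullet> B i) *\<^sub>R B i)"
proof -
  let ?E = "{y. y = (\<Sum>i\<in>I. (y \<bullet> B i) *\<^sub>R B i)}"
  have "subspace ?E"
  proof (unfold subspace_def, intro conjI allI ballI; unfold mem_Collect_eq)
    fix c x assume "x = (\<Sum>i\<in>I. (x \<bullet> B i) *\<^sub>R B i)"
    then have "c *\<^sub>R x = c *\<^sub>R (\<Sum>i\<in>I. (x \<bullet> B i) *\<^sub>R B i)" by simp
    also have "\<dots> = (\<Sum>i\<in>I. (c *\<^sub>R x \<bullet> B i) *\<^sub>R B i)"
      by (simp add: scaleR_sum_right)
    finally show "c *\<^sub>R x = (\<Sum>i\<in>I. (c *\<^sub>R x \<bullet> B i) *\<^sub>R B i)" .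
  qed (auto simp: inner_add_left scaleR_add_left sum.distrib)
  moreover have "B j \<in> ?E" if j: "j \<in> I" for j
  proof -
    have "(\<Sum>i\<in>I. (B j \<bullet> B i) *\<^sub>R B i) = (\<Sum>i\<in>I. if j = i then B i else 0)"
      using on j by (intro sum.cong) (auto simp: orthonormal_on_def)
    then show ?thesis using j fin by simp
  qed
  ultimately show ?thesis using y span_minimal[of "B ` I" ?E] by blast
qed

lemma inner_eq_sum_orthonormal:
  fixes B :: "'i \<Rightarrow> 'a::euclidean_space"
  assumes "finite I" "orthonormal_on I B" "b \<in> span (B ` I)"
  shows "a \<bullet> b = (\<Sum>i\<in>I. (a \<bullet> B i) * (b \<bullet> B i))"
proof -
  have "a \<bullet> b = a \<bullet> (\<Sum>i\<in>I. (b \<bullet> B i) *\<^sub>R B i)"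
    using orthonormal_span_eq_sum[OF assms] by simp
  also have "\<dots> = (\<Sum>i\<in>I. (a \<bullet> B i) * (b \<bullet> B i))"
    by (simp add: inner_sum_right mult.commute)
  finally show ?thesis .
qed

lemma orthonormal_residual_orthogonal:
  fixes B :: "'i \<Rightarrow> 'a::euclidean_space"
  assumes "finite I" "orthonormal_on I B" "y \<in> span (B ` I)"
  shows "(e - (\<Sum>i\<in>I. (e \<bullet> B i) *\<^sub>R B i)) \<bullet> y = 0"
proof -
  have "(\<Sum>i\<in>I. (e \<bullet> B i) *\<^sub>R B i) \<bullet> y = (\<Sum>i\<in>I. (e \<bullet> B i) * (y \<bullet> B i))"
    by (simp add: inner_sum_left inner_commute[of "B _" y])
  also have "\<dots> = e \<bullet> y"
    using inner_eq_sum_orthonormal[OF assms] by simp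
  finally show ?thesis by (simp add: inner_diff_left)
qed

lemma orthogonal_projection_unique:
  fixes p q :: "'a::real_inner"
  assumes "subspace V" "p \<in> V" "q \<in> V" "\<forall>y\<in>V. (e - p) \<bullet> y = 0" "\<forall>y\<in>V. (e - q) \<bullet> y = 0"
  shows "p = q"
proof -
  have "p - q \<in> V" using assms by (simp add: subspace_diff)
  moreover have "(p - q) \<bullet> (p - q) = (e - q) \<bullet> (p - q) - (e - p) \<bullet> (p - q)"
    by (simp add: inner_diff_left)
  ultimately have "(p - q) \<bullet> (p - q) = 0" using assms by simp
  then show ?thesis by simp
qed

lemma mem_span_orthonormal_if_Parseval:
  fixes B :: "'i \<Rightarrow> 'a::euclidean_space"
  assumes fin: "finite I" and on: "orthonormal_on I B"
    and Parseval: "(\<Sum>i\<in>I. (g \<bullet> B i)\<^sup>2) = g \<bullet> g"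
  shows "g \<in> span (B ` I)"
proof -
  define p where "p = (\<Sum>i\<in>I. (g \<bullet> B i) *\<^sub>R B i)"
  have p: "p \<in> span (B ` I)"
    unfolding p_def by (intro span_sum span_scale span_base) auto
  have orth: "(g - p) \<bullet> y = 0" if "y \<in> span (B ` I)" for y
    unfolding p_def using orthonormal_residual_orthogonal[OF fin on that] .
  have gp: "(g - p) \<bullet> p = 0"
    using orth[OF p] .
  have "p \<bullet> B i = g \<bullet> B i" if "i \<in> I" for i
    using orth[of "B i"] that by (simp add: inner_diff_left span_base)
  then have "p \<bullet> p = (\<Sum>i\<in>I. (g \<bullet> B i)\<^sup>2)"
    using inner_eq_sum_orthonormal[OF fin on p, of p] by (simp add: power2_eq_square)
  then have "(g - p) \<bullet> (g - p) = 0"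
    using gp Parseval by (simp add: inner_diff_left inner_diff_right inner_commute)
  then show ?thesis using p by simp
qed

section \<open>Oriented planes and their limits\<close>

lemma oplane_of_memD:
  assumes "G \<in> oplane_of F"
  shows "orthonormal_frame G" "span (range G) = span (range F)"
    "det ((\<chi> i j. F i \<bullet> G j) :: real^'k^'k) > 0"
  using assms by (auto simp: oplane_of_def)

lemma mem_oplane_of_self:
  fixes F :: "'k::finite \<Rightarrow> 'a::euclidean_space"
  assumes "orthonormal_frame F"
  shows "F \<in> oplane_of F"
proof -
  have "((\<chi> i j. F i \<bullet> F j) :: real^'k^'k) = mat 1"
    using assms by (simp add: mat_def vec_eq_iff orthonormal_frame_def)
  then show ?thesis using assms by (simp add: oplane_of_def)
qed

lemma lin_oplane_of:
  fixes F :: "'k::finite \<Rightarrow> 'a::euclidean_space"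
  assumes "orthonormal_frame F"
  shows "lin (oplane_of F) = span (range F)"
  using mem_oplane_of_self[OF assms] by (auto simp: lin_def oplane_of_def)

lemma frame_matrix_mult:
  fixes F G X :: "'k::finite \<Rightarrow> 'a::euclidean_space"
  assumes G: "orthonormal_frame G" and X: "\<And>j. X j \<in> span (range G)"
  shows "((\<chi> i j. F i \<bullet> X j) :: real^'k^'k) = (\<chi> i j. F i \<bullet> G j) ** (\<chi> i j. G i \<bullet> X j)"
proof -
  have "F i \<bullet> X j = (\<Sum>l\<in>UNIV. (F i \<bullet> G l) * (G l \<bullet> X j))" for i j
    using G inner_eq_sum_orthonormal[OF finite _ X[of j], of "F i"]
    by (simp add: orthonormal_frame_iff inner_commute)
  then show ?thesis by (simp add: matrix_matrix_mult_def vec_eq_iff)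
qed

lemma oplane_of_eq:
  fixes F G :: "'k::finite \<Rightarrow> 'a::euclidean_space"
  assumes F: "orthonormal_frame F" and G: "G \<in> oplane_of F"
  shows "oplane_of G = oplane_of F"
proof -
  note g = oplane_of_memD[OF G]
  have "transpose ((\<chi> i j. F i \<bullet> G j) :: real^'k^'k) = (\<chi> i j. G i \<bullet> F j)"
    by (simp add: transpose_def vec_eq_iff inner_commute)
  then have GF: "det ((\<chi> i j. G i \<bullet> F j) :: real^'k^'k) > 0"
    using g(3) by (metis det_transpose)
  show ?thesis
  proof (rule Set.set_eqI)
    fix X
    have "X \<in> oplane_of G \<longleftrightarrow> orthonormal_frame X \<and> span (range X) = span (range F)
        \<and> det ((\<chi> i j. G i \<bullet> X j) :: real^'k^'k) > 0"
      using g(2) by (simp add: oplane_of_def)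
    also have "\<dots> \<longleftrightarrow> X \<in> oplane_of F"
    proof (cases "orthonormal_frame X \<and> span (range X) = span (range F)")
      case True
      then have "\<And>j. X j \<in> span (range F)" "\<And>j. X j \<in> span (range G)"
        using g(2) by (metis rangeI span_base)+
      then have "((\<chi> i j. F i \<bullet> X j) :: real^'k^'k) = (\<chi> i j. F i \<bullet> G j) ** (\<chi> i j. G i \<bullet> X j)"
        and "((\<chi> i j. G i \<bullet> X j) :: real^'k^'k) = (\<chi> i j. G i \<bullet> F j) ** (\<chi> i j. F i \<bullet> X j)"
        using frame_matrix_mult[OF g(1)] frame_matrix_mult[OF F] by blast+
      then show ?thesis
        using True g(3) GF by (auto simp: oplane_of_def det_mul zero_less_mult_iff)
    qed (auto simp: oplane_of_def)
    finally show "X \<in> oplane_of G \<longleftrightarrow> X \<in> oplane_of F" .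
  qed
qed

lemma is_oplane_memD:
  fixes u :: "('k::finite \<Rightarrow> 'a::euclidean_space) set"
  assumes "is_oplane u" "E \<in> u"
  shows "orthonormal_frame E" "u = oplane_of E" "lin u = span (range E)"
proof -
  obtain F where F: "orthonormal_frame F" "u = oplane_of F"
    using assms(1) is_oplane_def by blast
  show E: "orthonormal_frame E" and u: "u = oplane_of E"
    using assms(2) oplane_of_memD(1) oplane_of_eq[OF F(1)] F(2) by auto
  show "lin u = span (range E)"
    using lin_oplane_of[OF E] u by simp
qed

lemma is_oplane_nonempty: "is_oplane u \<Longrightarrow> \<exists>E. E \<in> u"
  unfolding is_oplane_def using mem_oplane_of_self by blast

lemma subspace_lin: "is_oplane u \<Longrightarrow> subspace (lin u)"
  using is_oplane_nonempty is_oplane_memD(3) by (metis subspace_span)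

lemma dim_lin:
  fixes u :: "('k::finite \<Rightarrow> 'a::euclidean_space) set"
  assumes u: "is_oplane u"
  shows "dim (lin u) = CARD('k)"
proof -
  obtain E where E: "E \<in> u" using is_oplane_nonempty[OF u] by blast
  have on: "E i \<bullet> E j = (if i = j then 1 else 0)" for i j
    using is_oplane_memD(1)[OF u E] by (simp add: orthonormal_frame_def)
  then have "inj E"
    by (metis injI zero_neq_one)
  moreover have "0 \<notin> range E"
    using on by (metis image_iff inner_zero_left zero_neq_one)
  then have "independent (range E)"
    by (intro pairwise_orthogonal_independent) (use on in \<open>auto simp: pairwise_def orthogonal_def\<close>)
  ultimately show ?thesis
    using is_oplane_memD(3)[OF u E] by (simp add: dim_eq_card_independent card_image)
qed

lemma det_frame_matrix_eq_1:
  fixes X Y :: "'k::finite \<Rightarrow> 'a::euclidean_space"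
  assumes X: "orthonormal_frame X" and Y: "Y \<in> oplane_of X"
  shows "det ((\<chi> i j. X i \<bullet> Y j) :: real^'k^'k) = 1"
proof -
  define M where "M = ((\<chi> i j. X i \<bullet> Y j) :: real^'k^'k)"
  note y = oplane_of_memD[OF Y]
  have "Y j \<in> span (range X)" for j
    using y(2) by (metis rangeI span_base)
  then have "(\<Sum>l\<in>UNIV. (X l \<bullet> Y i) * (X l \<bullet> Y j)) = Y i \<bullet> Y j" for i j
    using X inner_eq_sum_orthonormal[OF finite _ \<open>Y j \<in> _\<close>, of "Y i"]
    by (simp add: orthonormal_frame_iff inner_commute)
  then have "transpose M ** M = mat 1"
    using y(1) by (simp add: M_def orthonormal_frame_def matrix_matrix_mult_def transpose_def mat_def vec_eq_iff)
  then have "det M * det M = 1"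
    by (metis det_I det_mul det_transpose)
  then have "(det M - 1) * (det M + 1) = 0"
    by (simp add: algebra_simps)
  then show ?thesis
    using y(3) by (simp add: M_def)
qed

lemma tendsto_det:
  fixes M :: "nat \<Rightarrow> real^'k::finite^'k"
  assumes "\<And>i j. (\<lambda>m. M m $ i $ j) \<longlonglongrightarrow> A $ i $ j"
  shows "(\<lambda>m. det (M m)) \<longlonglongrightarrow> det A"
  unfolding det_def by (intro tendsto_intros assms)

lemma frame_limit_in_span:
  fixes X :: "nat \<Rightarrow> 'k::finite \<Rightarrow> 'a::euclidean_space"
  assumes X: "\<And>m. orthonormal_frame (X m)" and F: "orthonormal_frame F"
    and y: "\<And>m. y m \<in> span (range (X m))"
    and XF: "\<And>i. (\<lambda>m. X m i) \<longlonglongrightarrow> F i" and yz: "y \<longlonglongrightarrow> z"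
  shows "z \<in> span (range F)"
proof -
  have "(\<Sum>i\<in>UNIV. (y m \<bullet> X m i)\<^sup>2) = y m \<bullet> y m" for m
    using inner_eq_sum_orthonormal[OF finite _ y[of m], of "y m"] X[of m]
    by (simp add: orthonormal_frame_iff power2_eq_square)
  moreover have "(\<lambda>m. \<Sum>i\<in>UNIV. (y m \<bullet> X m i)\<^sup>2) \<longlonglongrightarrow> (\<Sum>i\<in>UNIV. (z \<bullet> F i)\<^sup>2)"
    by (intro tendsto_intros XF yz)
  moreover have "(\<lambda>m. y m \<bullet> y m) \<longlonglongrightarrow> z \<bullet> z"
    by (intro tendsto_intros yz)
  ultimately have "(\<Sum>i\<in>UNIV. (z \<bullet> F i)\<^sup>2) = z \<bullet> z"
    using LIMSEQ_unique by fastforce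
  then show ?thesis
    using mem_span_orthonormal_if_Parseval[OF finite] F by (simp add: orthonormal_frame_iff)
qed

lemma oplane_of_limit:
  fixes X Y :: "nat \<Rightarrow> 'k::finite \<Rightarrow> 'a::euclidean_space"
  assumes X: "\<And>m. orthonormal_frame (X m)" and Y: "\<And>m. Y m \<in> oplane_of (X m)"
    and F: "orthonormal_frame F" and G: "orthonormal_frame G"
    and XF: "\<And>i. (\<lambda>m. X m i) \<longlonglongrightarrow> F i" and YG: "\<And>i. (\<lambda>m. Y m i) \<longlonglongrightarrow> G i"
  shows "G \<in> oplane_of F"
proof -
  note y = oplane_of_memD[OF Y]
  have "G j \<in> span (range F)" for j
    by (rule frame_limit_in_span[OF X F _ XF YG]) (metis y(2) rangeI span_base)
  moreover have "F j \<in> span (range G)" for j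
    by (rule frame_limit_in_span[OF y(1) G _ YG XF]) (metis y(2) rangeI span_base)
  ultimately have "span (range G) = span (range F)"
    by (metis span_eq image_subset_iff)
  moreover have "det ((\<chi> i j. F i \<bullet> G j) :: real^'k^'k) = 1"
  proof (rule LIMSEQ_unique)
    show "(\<lambda>m. det ((\<chi> i j. X m i \<bullet> Y m j) :: real^'k^'k)) \<longlonglongrightarrow> det ((\<chi> i j. F i \<bullet> G j) :: real^'k^'k)"
      by (rule tendsto_det) (simp add: tendsto_inner XF YG)
    show "(\<lambda>m. det ((\<chi> i j. X m i \<bullet> Y m j) :: real^'k^'k)) \<longlonglongrightarrow> 1"
      by (simp add: det_frame_matrix_eq_1[OF X Y])
  qed
  ultimately show ?thesis
    using G by (simp add: oplane_of_def)
qed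

lemma oplane_tendsto_unique:
  fixes us :: "nat \<Rightarrow> ('k::finite \<Rightarrow> 'a::euclidean_space) set"
  assumes us: "\<And>m. is_oplane (us m)" and a: "is_oplane a" and b: "is_oplane b"
    and "oplane_tendsto us a" "oplane_tendsto us b"
  shows "a = b"
proof -
  obtain X F where X: "\<And>m. X m \<in> us m" "F \<in> a" "\<And>i. (\<lambda>m. X m i) \<longlonglongrightarrow> F i"
    using assms(4) oplane_tendsto_def by blast
  obtain Y G where Y: "\<And>m. Y m \<in> us m" "G \<in> b" "\<And>i. (\<lambda>m. Y m i) \<longlonglongrightarrow> G i"
    using assms(5) oplane_tendsto_def by blast
  have "G \<in> oplane_of F"
  proof (rule oplane_of_limit[OF _ _ _ _ X(3) Y(3)])
    show "orthonormal_frame (X m)" "Y m \<in> oplane_of (X m)" for m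
      using is_oplane_memD[OF us X(1)] Y(1) by auto
    show "orthonormal_frame F" "orthonormal_frame G"
      using is_oplane_memD(1) a b X(2) Y(2) by auto
  qed
  then show ?thesis
    using is_oplane_memD(2) a b X(2) Y(2) by metis
qed

lemma oplane_tendsto_subseq:
  assumes "oplane_tendsto us a" "strict_mono r"
  shows "oplane_tendsto (\<lambda>j. us (r j)) a"
proof -
  obtain X F where X: "\<And>m. X m \<in> us m" "F \<in> a" "\<And>i. (\<lambda>m. X m i) \<longlonglongrightarrow> F i"
    using assms(1) oplane_tendsto_def by blast
  have "(\<lambda>j. X (r j) i) \<longlonglongrightarrow> F i" for i
    using LIMSEQ_subseq_LIMSEQ[OF X(3) assms(2)] by (simp add: o_def)
  then show ?thesis
    unfolding oplane_tendsto_def using X by (intro exI[of _ "\<lambda>j. X (r j)"] exI[of _ F]) auto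
qed

lemma skew_fibration_fiberD:
  assumes "skew_fibration Fib" "P \<in> Fib"
  shows "is_oplane (fst P)" "x \<in> lin (fst P) \<Longrightarrow> snd P \<bullet> x = 0"
proof -
  have "\<forall>P\<in>Fib. is_oplane (fst P) \<and> (\<forall>x\<in>lin (fst P). snd P \<bullet> x = 0)"
    using assms(1) unfolding skew_fibration_def by (elim conjE) assumption
  then show "is_oplane (fst P)" "x \<in> lin (fst P) \<Longrightarrow> snd P \<bullet> x = 0"
    using assms(2) by auto
qed

lemma skew_fibration_disjoint:
  assumes "skew_fibration Fib" "P \<in> Fib" "Q \<in> Fib" "z \<in> aff P" "z \<in> aff Q"
  shows "P = Q"
proof -
  have "\<forall>P\<in>Fib. \<forall>Q\<in>Fib. P \<noteq> Q \<longrightarrow> aff P \<inter> aff Q = {}"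
    using assms(1) unfolding skew_fibration_def by (elim conjE) assumption
  then show ?thesis
    using assms(2-5) by blast
qed

lemma skew_fibration_skew:
  assumes "skew_fibration Fib" "P \<in> Fib" "Q \<in> Fib" "z \<in> lin (fst P)" "z \<in> lin (fst Q)" "z \<noteq> 0"
  shows "P = Q"
proof -
  have "\<forall>P\<in>Fib. \<forall>Q\<in>Fib. P \<noteq> Q \<longrightarrow> lin (fst P) \<inter> lin (fst Q) = {0}"
    using assms(1) unfolding skew_fibration_def by (elim conjE) assumption
  then show ?thesis
    using assms(2-6) by blast
qed

lemma skew_fibration_cover:
  assumes "skew_fibration Fib"
  shows "\<exists>P\<in>Fib. z \<in> aff P"
proof -
  have "\<forall>z. \<exists>P\<in>Fib. z \<in> aff P"
    using assms unfolding skew_fibration_def by (elim conjE) assumption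
  then show ?thesis ..
qed

lemma skew_fibration_tendsto:
  assumes "skew_fibration Fib" "zs \<longlonglongrightarrow> z" "P \<in> Fib" "z \<in> aff P"
    and "\<And>m. Ps m \<in> Fib" "\<And>m. zs m \<in> aff (Ps m)"
  shows "oplane_tendsto (\<lambda>m. fst (Ps m)) (fst P)"
proof -
  have "\<forall>z zs P Ps. zs \<longlonglongrightarrow> z \<longrightarrow> P \<in> Fib \<longrightarrow> z \<in> aff P
        \<longrightarrow> (\<forall>m. Ps m \<in> Fib \<and> zs m \<in> aff (Ps m))
        \<longrightarrow> oplane_tendsto (\<lambda>m. fst (Ps m)) (fst P) \<and> (\<lambda>m. snd (Ps m)) \<longlonglongrightarrow> snd P"
    using assms(1) unfolding skew_fibration_def by (elim conjE) assumption
  then show ?thesis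
    using assms(2-6) by blast
qed

lemma mem_aff_iff: "z \<in> aff P \<longleftrightarrow> z - snd P \<in> lin (fst P)"
  unfolding aff_def by (auto intro: image_eqI[where x = "z - snd P"])

lemma snd_mem_aff: "is_oplane (fst P) \<Longrightarrow> snd P \<in> aff P"
  by (simp add: mem_aff_iff subspace_0 subspace_lin)

lemma diff_mem_lin_if_mem_aff:
  assumes "is_oplane (fst P)" "z \<in> aff P" "w \<in> aff P"
  shows "w - z \<in> lin (fst P)"
proof -
  have "(w - snd P) - (z - snd P) \<in> lin (fst P)"
    by (rule subspace_diff[OF subspace_lin[OF assms(1)]]) (use assms(2,3) in \<open>simp_all add: mem_aff_iff\<close>)
  then show ?thesis
    by simp
qed

lemma alpha_eq:
  assumes "is_oplane (fst P)"
  shows "alpha P = {(y + t *\<^sub>R snd P, t) | y t. y \<in> lin (fst P)}"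
proof -
  let ?f = "\<lambda>(y, t). (y + t *\<^sub>R snd P, t :: real)"
  have V: "{(y + t *\<^sub>R snd P, t) | y t. y \<in> lin (fst P)} = ?f ` (lin (fst P) \<times> UNIV)"
    by auto
  have "linear ?f"
    by (auto simp: linear_iff algebra_simps)
  then have "subspace (?f ` (lin (fst P) \<times> UNIV))"
    using assms by (intro linear_subspace_image subspace_Times subspace_lin subspace_UNIV)
  moreover have "(\<lambda>x. (x, 1)) ` aff P \<subseteq> ?f ` (lin (fst P) \<times> UNIV)"
    by (force simp: mem_aff_iff)
  ultimately have "alpha P \<subseteq> ?f ` (lin (fst P) \<times> UNIV)"
    unfolding alpha_def by (rule span_minimal[rotated])
  moreover have "(y + t *\<^sub>R snd P, t) \<in> alpha P" if y: "y \<in> lin (fst P)" for y t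
  proof -
    have "snd P \<in> aff P" "snd P + y \<in> aff P"
      using y snd_mem_aff[OF assms] by (simp_all add: mem_aff_iff)
    then have "(snd P, 1) \<in> alpha P" "(snd P + y, 1) \<in> alpha P"
      unfolding alpha_def by (auto intro: span_base)
    then have "t *\<^sub>R (snd P, 1) + ((snd P + y, 1) - (snd P, 1)) \<in> alpha P"
      unfolding alpha_def by (intro span_add span_scale span_diff)
    then show ?thesis
      by (simp add: algebra_simps)
  qed
  ultimately show ?thesis
    using V by blast
qed

lemma Pair_mem_alpha:
  assumes "is_oplane (fst P)" "y \<in> lin (fst P)" "d \<in> aff P"
  shows "(y + t *\<^sub>R d, t) \<in> alpha P"
proof -
  have "y + t *\<^sub>R (d - snd P) \<in> lin (fst P)"
    using assms subspace_lin[OF assms(1)] by (simp add: mem_aff_iff subspace_add subspace_scale)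
  moreover have "(y + t *\<^sub>R d, t) = ((y + t *\<^sub>R (d - snd P)) + t *\<^sub>R snd P, t)"
    by (simp add: algebra_simps)
  ultimately show ?thesis
    using alpha_eq[OF assms(1)] by auto
qed

lemma skew_fibration_alpha_unique:
  assumes F: "skew_fibration Fib" and P: "P \<in> Fib" and Q: "Q \<in> Fib"
    and p: "p \<in> alpha P" "p \<in> alpha Q" "p \<noteq> 0"
  shows "P = Q"
proof -
  note oP = skew_fibration_fiberD(1)[OF F P] and oQ = skew_fibration_fiberD(1)[OF F Q]
  obtain y t where y: "p = (y + t *\<^sub>R snd P, t)" "y \<in> lin (fst P)"
    using p(1) alpha_eq[OF oP] by blast
  obtain y' where y': "p = (y' + t *\<^sub>R snd Q, t)" "y' \<in> lin (fst Q)"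
    using p(2) alpha_eq[OF oQ] y(1) by auto
  show ?thesis
  proof (cases "t = 0")
    case True
    then show ?thesis
      using y y' p(3) skew_fibration_skew[OF F P Q, of y] by (auto simp: zero_prod_def)
  next
    case False
    let ?z = "(1 / t) *\<^sub>R fst p"
    have "?z - snd P = (1 / t) *\<^sub>R y"
      using y(1) False by (simp add: algebra_simps)
    moreover have "?z - snd Q = (1 / t) *\<^sub>R y'"
      using y'(1) False by (simp add: algebra_simps)
    ultimately have "?z \<in> aff P" "?z \<in> aff Q"
      using y(2) y'(2) subspace_lin[OF oP] subspace_lin[OF oQ]
      by (simp_all add: mem_aff_iff subspace_scale)
    then show ?thesis
      using skew_fibration_disjoint[OF F P Q] by blast
  qed
qed

lemma abs_mult_norm_le_norm_Pair:
  fixes y v :: "'a::real_inner"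
  assumes "y \<bullet> v = 0"
  shows "\<bar>t\<bar> * norm v \<le> norm (y + t *\<^sub>R v, t)"
proof -
  have "norm (y + t *\<^sub>R v, t)^2 = (y + t *\<^sub>R v) \<bullet> (y + t *\<^sub>R v) + t^2"
    by (simp add: norm_Pair power2_norm_eq_inner)
  also have "\<dots> = y \<bullet> y + t^2 * (v \<bullet> v) + t^2"
    using assms by (simp add: inner_add_left inner_add_right inner_commute power2_eq_square algebra_simps)
  also have "\<dots> \<ge> (\<bar>t\<bar> * norm v)^2"
    by (simp add: power_mult_distrib power2_norm_eq_inner)
  finally show ?thesis
    by (rule power2_le_imp_le) simp
qed

section \<open>Projection onto nearby fibers\<close>

definition fiber_at :: "(('k::finite \<Rightarrow> 'a::euclidean_space) set \<times> 'a) set \<Rightarrow> 'a \<Rightarrow> ('k \<Rightarrow> 'a) set \<times> 'a" where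
  "fiber_at Fib z = (SOME P. P \<in> Fib \<and> z \<in> aff P)"

lemma fiber_at:
  assumes "skew_fibration Fib"
  shows "fiber_at Fib z \<in> Fib" "z \<in> aff (fiber_at Fib z)"
proof -
  have "\<exists>P. P \<in> Fib \<and> z \<in> aff P"
    using skew_fibration_cover[OF assms] by blast
  then have "fiber_at Fib z \<in> Fib \<and> z \<in> aff (fiber_at Fib z)"
    unfolding fiber_at_def by (rule someI_ex)
  then show "fiber_at Fib z \<in> Fib" "z \<in> aff (fiber_at Fib z)"
    by auto
qed

lemma fiber_at_eq: "skew_fibration Fib \<Longrightarrow> P \<in> Fib \<Longrightarrow> z \<in> aff P \<Longrightarrow> fiber_at Fib z = P"
  using fiber_at skew_fibration_disjoint by metis

lemma is_oplane_fiber_at: "skew_fibration Fib \<Longrightarrow> is_oplane (fst (fiber_at Fib z))"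
  using fiber_at(1) skew_fibration_fiberD(1) by blast

lemma fiber_at_tendsto:
  assumes "skew_fibration Fib" "zs \<longlonglongrightarrow> z"
  shows "oplane_tendsto (\<lambda>m. fst (fiber_at Fib (zs m))) (fst (fiber_at Fib z))"
  by (rule skew_fibration_tendsto[OF assms]) (use fiber_at[OF assms(1)] in auto)

definition oplane_proj :: "('k::finite \<Rightarrow> 'a::euclidean_space) set \<Rightarrow> 'a \<Rightarrow> 'a" where
  "oplane_proj u e = (\<Sum>l\<in>UNIV. (e \<bullet> (SOME E. E \<in> u) l) *\<^sub>R (SOME E. E \<in> u) l)"

lemma oplane_proj_eq_sum:
  fixes u :: "('k::finite \<Rightarrow> 'a::euclidean_space) set"
  assumes u: "is_oplane u" and E: "E \<in> u"
  shows "oplane_proj u e = (\<Sum>l\<in>UNIV. (e \<bullet> E l) *\<^sub>R E l)"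
proof -
  have proj: "(\<Sum>l\<in>UNIV. (e \<bullet> F l) *\<^sub>R F l) \<in> lin u"
    "\<forall>y\<in>lin u. (e - (\<Sum>l\<in>UNIV. (e \<bullet> F l) *\<^sub>R F l)) \<bullet> y = 0" if F: "F \<in> u" for F
    using is_oplane_memD[OF u F] orthonormal_residual_orthogonal[OF finite, where B = F]
    by (auto simp: orthonormal_frame_iff intro: span_sum span_scale span_base)
  have "(SOME E. E \<in> u) \<in> u"
    by (rule someI[where P = "\<lambda>E. E \<in> u", OF E])
  from orthogonal_projection_unique[OF subspace_lin[OF u] proj(1)[OF this] proj(1)[OF E]
      proj(2)[OF this] proj(2)[OF E]]
  show ?thesis
    unfolding oplane_proj_def by blast
qed

lemma
  fixes u :: "('k::finite \<Rightarrow> 'a::euclidean_space) set"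
  assumes u: "is_oplane u"
  shows oplane_proj_in_lin: "oplane_proj u e \<in> lin u"
    and oplane_proj_id: "e \<in> lin u \<Longrightarrow> oplane_proj u e = e"
    and linear_oplane_proj: "linear (oplane_proj u)"
proof -
  obtain E where E: "E \<in> u"
    using is_oplane_nonempty[OF u] by blast
  note E' = is_oplane_memD[OF u E] and eq = oplane_proj_eq_sum[OF u E]
  show "oplane_proj u e \<in> lin u"
    using E'(3) by (simp add: eq span_sum span_scale span_base)
  show "oplane_proj u e = e" if "e \<in> lin u"
    using that E'(3) orthonormal_span_eq_sum[OF finite, where B = E and y = e] E'(1)
    by (simp add: eq orthonormal_frame_iff)
  show "linear (oplane_proj u)"
    by (auto simp: linear_iff eq inner_add_left scaleR_add_left sum.distrib scaleR_sum_right)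
qed

lemma tendsto_oplane_proj:
  fixes us :: "nat \<Rightarrow> ('k::finite \<Rightarrow> 'a::euclidean_space) set"
  assumes "\<And>m. is_oplane (us m)" "is_oplane u" "oplane_tendsto us u" "es \<longlonglongrightarrow> e"
  shows "(\<lambda>m. oplane_proj (us m) (es m)) \<longlonglongrightarrow> oplane_proj u e"
proof -
  obtain X F where X: "\<And>m. X m \<in> us m" "F \<in> u" "\<And>i. (\<lambda>m. X m i) \<longlonglongrightarrow> F i"
    using assms(3) oplane_tendsto_def by blast
  have "(\<lambda>m. \<Sum>l\<in>UNIV. (es m \<bullet> X m l) *\<^sub>R X m l) \<longlonglongrightarrow> (\<Sum>l\<in>UNIV. (e \<bullet> F l) *\<^sub>R F l)"
    by (intro tendsto_intros X(3) assms(4))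
  then show ?thesis
    using oplane_proj_eq_sum[OF assms(1) X(1)] oplane_proj_eq_sum[OF assms(2) X(2)] by simp
qed

definition fiber_proj :: "(('k::finite \<Rightarrow> 'a::euclidean_space) set \<times> 'a) set \<Rightarrow> 'a \<Rightarrow> 'a \<Rightarrow> 'a" where
  "fiber_proj Fib z = oplane_proj (fst (fiber_at Fib z))"

lemma tendsto_fiber_proj:
  assumes "skew_fibration Fib" "zs \<longlonglongrightarrow> z" "es \<longlonglongrightarrow> e"
  shows "(\<lambda>m. fiber_proj Fib (zs m) (es m)) \<longlonglongrightarrow> fiber_proj Fib z e"
  unfolding fiber_proj_def
  by (rule tendsto_oplane_proj[OF _ _ fiber_at_tendsto[OF assms(1,2)] assms(3)])
     (simp_all add: is_oplane_fiber_at assms(1))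

lemma continuous_on_fiber_proj:
  fixes Fib :: "(('k::finite \<Rightarrow> 'a::euclidean_space) set \<times> 'a) set"
  assumes "skew_fibration Fib"
  shows "continuous_on UNIV (\<lambda>p. fiber_proj Fib (fst p) (snd p))"
proof (rule continuous_on_sequentiallyI)
  fix ps :: "nat \<Rightarrow> 'a \<times> 'a" and p
  assume "ps \<longlonglongrightarrow> p"
  then show "(\<lambda>m. fiber_proj Fib (fst (ps m)) (snd (ps m))) \<longlonglongrightarrow> fiber_proj Fib (fst p) (snd p)"
    by (intro tendsto_fiber_proj[OF assms] tendsto_fst tendsto_snd)
qed

lemma fiber_proj_snd:
  assumes "skew_fibration Fib" "Q \<in> Fib"
  shows "fiber_proj Fib (snd Q) = oplane_proj (fst Q)"
  using fiber_at_eq[OF assms snd_mem_aff[OF skew_fibration_fiberD(1)[OF assms]]]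
  by (simp add: fiber_proj_def)

lemma eventually_nhds_subspace_Int_eq_0:
  fixes A B :: "'a::metric_space \<Rightarrow> 'b::euclidean_space set"
  assumes A: "\<And>d. subspace (A d)" and B: "\<And>d. subspace (B d)"
    and no_limit: "\<And>ds ts t. ds \<longlonglongrightarrow> d0 \<Longrightarrow> ts \<longlonglongrightarrow> t \<Longrightarrow> norm t = 1
      \<Longrightarrow> (\<And>j. ts j \<in> A (ds j) \<inter> B (ds j)) \<Longrightarrow> False"
  shows "\<forall>\<^sub>F d in nhds d0. A d \<inter> B d = {0}"
proof (rule ccontr)
  assume "\<not> ?thesis"
  then obtain ds where ds: "ds \<longlonglongrightarrow> d0" and "\<not> (\<forall>\<^sub>F j in sequentially. A (ds j) \<inter> B (ds j) = {0})"
    unfolding eventually_nhds_iff_sequentially by blast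
  from not_eventually_sequentiallyD[OF this(2)]
  obtain r :: "nat \<Rightarrow> nat" where r: "strict_mono r" and "\<And>j. A (ds (r j)) \<inter> B (ds (r j)) \<noteq> {0}"
    by metis
  then have "\<exists>t. t \<in> sphere 0 1 \<and> t \<in> A (ds (r j)) \<inter> B (ds (r j))" for j
  proof -
    obtain t where t: "t \<in> A (ds (r j)) \<inter> B (ds (r j))" "t \<noteq> 0"
      using \<open>A (ds (r j)) \<inter> B (ds (r j)) \<noteq> {0}\<close> subspace_0[OF A] subspace_0[OF B] by blast
    then have "(1 / norm t) *\<^sub>R t \<in> A (ds (r j)) \<inter> B (ds (r j))"
      using subspace_scale[OF A] subspace_scale[OF B] by blast
    with t(2) show ?thesis
      by (intro exI[of _ "(1 / norm t) *\<^sub>R t"]) simp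
  qed
  then obtain ts where ts: "\<And>j. ts j \<in> sphere 0 1" "\<And>j. ts j \<in> A (ds (r j)) \<inter> B (ds (r j))"
    by metis
  obtain t r' where t: "t \<in> sphere 0 1" and r': "strict_mono r'" and "(ts \<circ> r') \<longlonglongrightarrow> t"
    using compact_sphere[THEN compact_imp_seq_compact] ts(1) by (metis seq_compactE)
  moreover have "(ds \<circ> (r \<circ> r')) \<longlonglongrightarrow> d0"
    using LIMSEQ_subseq_LIMSEQ[OF ds strict_mono_o[OF r r']] .
  ultimately show False
    using no_limit[of "ds \<circ> (r \<circ> r')" "ts \<circ> r'" t] ts(2) by simp
qed

lemma eventually_fiber_transversal:
  assumes F: "skew_fibration Fib" and Q: "Q \<in> Fib"
  shows "\<forall>\<^sub>F d in nhds (snd Q). lin (fst (fiber_at Fib d)) \<inter> (lin (fst Q))\<^sup>\<bottom> = {0}"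
proof (rule eventually_nhds_subspace_Int_eq_0)
  have oQ: "is_oplane (fst Q)"
    using skew_fibration_fiberD(1)[OF F Q] .
  fix ds ts t
  assume ds: "ds \<longlonglongrightarrow> snd Q" and ts: "ts \<longlonglongrightarrow> t" and t: "norm t = 1"
    and R: "\<And>j. ts j \<in> lin (fst (fiber_at Fib (ds j))) \<inter> (lin (fst Q))\<^sup>\<bottom>"
  have "(\<lambda>j. fiber_proj Fib (ds j) (ts j)) \<longlonglongrightarrow> fiber_proj Fib (snd Q) t"
    by (rule tendsto_fiber_proj[OF F ds ts])
  moreover have "fiber_proj Fib (ds j) (ts j) = ts j" for j
    using R[of j] by (simp add: fiber_proj_def oplane_proj_id is_oplane_fiber_at[OF F])
  moreover have "fiber_proj Fib (snd Q) = oplane_proj (fst Q)"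
    by (rule fiber_proj_snd[OF F Q])
  ultimately have "oplane_proj (fst Q) t = t"
    using ts LIMSEQ_unique by fastforce
  then have "t \<in> lin (fst Q)"
    using oplane_proj_in_lin[OF oQ, of t] by simp
  moreover have "\<forall>j. ts j \<in> (lin (fst Q))\<^sup>\<bottom>"
    using R by blast
  then have "t \<in> (lin (fst Q))\<^sup>\<bottom>"
    using closed_subspace[OF subspace_orthogonal_comp] ts by (metis closed_sequentially)
  ultimately show False
    using t by (auto simp: orthogonal_comp_def orthogonal_def)
qed (simp_all add: subspace_lin is_oplane_fiber_at[OF assms(1)] subspace_orthogonal_comp)

lemma eventually_fiber_proj_injective:
  assumes F: "skew_fibration Fib" and Q: "Q \<in> Fib"
  shows "\<forall>\<^sub>F d in nhds (snd Q). lin (fst Q) \<inter> {e. fiber_proj Fib d e = 0} = {0}"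
proof (rule eventually_nhds_subspace_Int_eq_0)
  have oQ: "is_oplane (fst Q)"
    using skew_fibration_fiberD(1)[OF F Q] .
  show "subspace {e. fiber_proj Fib d e = 0}" for d
    unfolding fiber_proj_def
    by (rule linear_subspace_kernel[OF linear_oplane_proj[OF is_oplane_fiber_at[OF F]]])
  fix ds ts t
  assume ds: "ds \<longlonglongrightarrow> snd Q" and ts: "ts \<longlonglongrightarrow> t" and t: "norm t = 1"
    and R: "\<And>j. ts j \<in> lin (fst Q) \<inter> {e. fiber_proj Fib (ds j) e = 0}"
  have "(\<lambda>j. fiber_proj Fib (ds j) (ts j)) \<longlonglongrightarrow> fiber_proj Fib (snd Q) t"
    by (rule tendsto_fiber_proj[OF F ds ts])
  moreover have "fiber_proj Fib (snd Q) = oplane_proj (fst Q)"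
    by (rule fiber_proj_snd[OF F Q])
  ultimately have "oplane_proj (fst Q) t = 0"
    using R by (simp add: LIMSEQ_const_iff)
  moreover have "\<forall>j. ts j \<in> lin (fst Q)"
    using R by blast
  then have "t \<in> lin (fst Q)"
    using closed_subspace[OF subspace_lin[OF oQ]] ts by (metis closed_sequentially)
  ultimately show False
    using t oplane_proj_id[OF oQ] by auto
qed (simp add: subspace_lin skew_fibration_fiberD(1)[OF assms])

section \<open>A chart near a fiber direction\<close>

locale fiber_chart =
  fixes Fib :: "(('k::finite \<Rightarrow> 'a::euclidean_space) set \<times> 'a) set"
    and Q :: "('k \<Rightarrow> 'a) set \<times> 'a" and x :: 'a and \<delta> :: real
  assumes skew: "skew_fibration Fib" and Q: "Q \<in> Fib"
    and x_lin: "x \<in> lin (fst Q)" and x_unit: "norm x = 1" and \<delta>_pos: "\<delta> > 0"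
    and transversal: "\<And>d. d \<in> ball (snd Q) \<delta> \<Longrightarrow> lin (fst (fiber_at Fib d)) \<inter> (lin (fst Q))\<^sup>\<bottom> = {0}"
    and proj_injective: "\<And>d. d \<in> ball (snd Q) \<delta> \<Longrightarrow> lin (fst Q) \<inter> {e. fiber_proj Fib d e = 0} = {0}"
begin

text \<open>Coordinates (d, w, t): d in the slice through snd Q orthogonal to Q, w in Q orthogonal to x.
  chart p is the central projection of lift p to the hyperplane tangent to the unit sphere at
  (x, 0), translated so that (x, 0) goes to 0.\<close>

definition lift :: "'a \<times> 'a \<times> real \<Rightarrow> 'a \<times> real" where
  "lift p = (fiber_proj Fib (fst p) (x + fst (snd p)) + snd (snd p) *\<^sub>R fst p, snd (snd p))"

definition height :: "'a \<times> 'a \<times> real \<Rightarrow> real" where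
  "height p = (x, 0) \<bullet> lift p"

definition chart :: "'a \<times> 'a \<times> real \<Rightarrow> 'a \<times> real" where
  "chart p = (1 / height p) *\<^sub>R lift p - (x, 0)"

definition chart_space :: "('a \<times> 'a \<times> real) set" where
  "chart_space = ((lin (fst Q))\<^sup>\<bottom>) \<times> (lin (fst Q) \<inter> ((span {x})\<^sup>\<bottom>)) \<times> UNIV"

definition chart_domain :: "('a \<times> 'a \<times> real) set" where
  "chart_domain = chart_space \<inter> {p. fst p \<in> ball (snd Q) \<delta> \<and> 0 < height p}"

lemma is_oplane_Q: "is_oplane (fst Q)"
  using skew_fibration_fiberD(1)[OF skew Q] .

lemma x_nonzero: "x \<noteq> 0"
  using x_unit by auto

lemma subspace_chart_space: "subspace chart_space"
  unfolding chart_space_def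
  by (intro subspace_Times subspace_orthogonal_comp subspace_inter subspace_lin is_oplane_Q subspace_UNIV)

lemma dim_chart_space: "dim chart_space = DIM('a)"
proof -
  have "(lin (fst Q))\<^sup>\<bottom> = {y \<in> UNIV. \<forall>z\<in>lin (fst Q). orthogonal z y}"
    by (simp add: orthogonal_comp_def)
  then have T: "dim ((lin (fst Q))\<^sup>\<bottom>) + CARD('k) = DIM('a)"
    using dim_subspace_orthogonal_to_vectors[OF subspace_lin[OF is_oplane_Q] subspace_UNIV subset_UNIV]
    by (simp add: dim_lin[OF is_oplane_Q] dim_UNIV)
  have "lin (fst Q) \<inter> (span {x})\<^sup>\<bottom> = {y \<in> lin (fst Q). \<forall>z\<in>span {x}. orthogonal z y}"
    by (auto simp: orthogonal_comp_def)
  moreover have "span {x} \<subseteq> lin (fst Q)"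
    using x_lin by (simp add: span_minimal subspace_lin[OF is_oplane_Q])
  ultimately have "dim (lin (fst Q) \<inter> (span {x})\<^sup>\<bottom>) + 1 = CARD('k)"
    using dim_subspace_orthogonal_to_vectors[OF subspace_span subspace_lin[OF is_oplane_Q], of "{x}"] x_nonzero
    by (simp add: dim_lin[OF is_oplane_Q])
  with T show ?thesis
    unfolding chart_space_def
    by (simp add: dim_Times subspace_Times subspace_orthogonal_comp subspace_inter subspace_lin[OF is_oplane_Q])
qed

lemma dim_hyperplane_x: "dim {q :: 'a \<times> real. (x, 0) \<bullet> q = 0} = DIM('a)"
proof -
  have "(x, 0 :: real) \<noteq> 0"
    using x_nonzero by (simp add: zero_prod_def)
  then show ?thesis
    using dim_hyperplane[of "(x, 0 :: real)"] by simp
qed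

lemma continuous_on_lift: "continuous_on UNIV lift"
proof -
  have "continuous_on UNIV (\<lambda>p :: 'a \<times> 'a \<times> real. (fst p, x + fst (snd p)))"
    by (intro continuous_intros)
  from continuous_on_compose[OF this continuous_on_subset[OF continuous_on_fiber_proj[OF skew]]]
  have "continuous_on UNIV (\<lambda>p :: 'a \<times> 'a \<times> real. fiber_proj Fib (fst p) (x + fst (snd p)))"
    by (simp add: o_def)
  then show ?thesis
    unfolding lift_def by (intro continuous_intros)
qed

lemma continuous_on_chart: "continuous_on chart_domain chart"
  unfolding chart_def height_def chart_domain_def
  by (intro continuous_intros continuous_on_subset[OF continuous_on_lift]) auto

lemma openin_chart_domain: "openin (top_of_set chart_space) chart_domain"
proof -
  have "open {p :: 'a \<times> 'a \<times> real. fst p \<in> ball (snd Q) \<delta> \<and> 0 < height p}"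
    unfolding height_def mem_ball
    by (intro open_Collect_conj open_Collect_less continuous_intros continuous_on_lift)
  then show ?thesis
    unfolding chart_domain_def by (rule openin_open_Int)
qed

lemma chart_in_hyperplane: "p \<in> chart_domain \<Longrightarrow> (x, 0) \<bullet> chart p = 0"
  using x_unit by (simp add: chart_def chart_domain_def height_def inner_diff_right dot_square_norm)

lemma lift_mem_alpha: "lift p \<in> alpha (fiber_at Fib (fst p))"
  unfolding lift_def
  by (intro Pair_mem_alpha is_oplane_fiber_at[OF skew] fiber_at(2)[OF skew])
     (simp add: fiber_proj_def oplane_proj_in_lin is_oplane_fiber_at[OF skew])

lemma chart_base: "(snd Q, 0, 0) \<in> chart_domain" "chart (snd Q, 0, 0) = 0"
proof -
  have lift: "lift (snd Q, 0, 0) = (x, 0)"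
    using x_lin by (simp add: lift_def fiber_proj_snd[OF skew Q] oplane_proj_id[OF is_oplane_Q])
  then have "height (snd Q, 0, 0) = 1"
    using x_unit by (simp add: height_def dot_square_norm)
  moreover have "snd Q \<in> (lin (fst Q))\<^sup>\<bottom>"
    using skew_fibration_fiberD(2)[OF skew Q] by (auto simp: orthogonal_comp_def orthogonal_def inner_commute)
  ultimately show "(snd Q, 0, 0) \<in> chart_domain" "chart (snd Q, 0, 0) = 0"
    using lift \<delta>_pos
    by (simp_all add: chart_domain_def chart_space_def chart_def subspace_0 subspace_orthogonal_comp
        subspace_lin[OF is_oplane_Q])
qed


lemma fiber_at_inj_on_transversal:
  assumes "d1 \<in> ball (snd Q) \<delta>" "d1 \<in> (lin (fst Q))\<^sup>\<bottom>" "d2 \<in> (lin (fst Q))\<^sup>\<bottom>"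
    and "fiber_at Fib d1 = fiber_at Fib d2"
  shows "d1 = d2"
proof -
  have "d2 \<in> aff (fiber_at Fib d1)"
    using fiber_at(2)[OF skew, of d2] assms(4) by simp
  then have "d2 - d1 \<in> lin (fst (fiber_at Fib d1))"
    by (rule diff_mem_lin_if_mem_aff[OF is_oplane_fiber_at[OF skew] fiber_at(2)[OF skew]])
  moreover have "d2 - d1 \<in> (lin (fst Q))\<^sup>\<bottom>"
    using assms(2,3) by (simp add: subspace_diff subspace_orthogonal_comp)
  ultimately have "d2 - d1 \<in> {0}"
    using transversal[OF assms(1)] by blast
  then show ?thesis
    by simp
qed

lemma inj_on_chart: "inj_on chart chart_domain"
proof (rule inj_onI)
  fix p1 p2
  assume p1: "p1 \<in> chart_domain" and p2: "p2 \<in> chart_domain" and eq: "chart p1 = chart p2"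
  obtain d1 w1 s1 where p1_eq: "p1 = (d1, w1, s1)" by (cases p1) auto
  obtain d2 w2 s2 where p2_eq: "p2 = (d2, w2, s2)" by (cases p2) auto
  define c where "c = height p1 / height p2"
  have h1: "height p1 > 0" and h2: "height p2 > 0"
    using p1 p2 by (simp_all add: chart_domain_def)
  have lift_eq: "lift p1 = c *\<^sub>R lift p2"
  proof -
    have "lift p1 = height p1 *\<^sub>R ((1 / height p1) *\<^sub>R lift p1)"
      using h1 by simp
    also have "\<dots> = height p1 *\<^sub>R ((1 / height p2) *\<^sub>R lift p2)"
      using eq by (simp add: chart_def)
    finally show ?thesis
      by (simp add: c_def)
  qed
  have "lift p1 \<noteq> 0"
    using h1 by (auto simp: height_def)
  moreover have "lift p1 \<in> alpha (fiber_at Fib d2)"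
    using lift_mem_alpha[of p2] p2_eq lift_eq by (simp add: alpha_def span_scale)
  ultimately have "fiber_at Fib d1 = fiber_at Fib d2"
    using skew_fibration_alpha_unique[OF skew fiber_at(1)[OF skew] fiber_at(1)[OF skew]]
      lift_mem_alpha[of p1] p1_eq by simp
  then have d: "d1 = d2"
    using p1 p2 p1_eq p2_eq by (intro fiber_at_inj_on_transversal) (auto simp: chart_domain_def chart_space_def)
  have s: "s1 = c * s2"
    using lift_eq p1_eq p2_eq by (simp add: lift_def)
  let ?e = "(x + w1) - c *\<^sub>R (x + w2)"
  have "fiber_proj Fib d1 (x + w1) = c *\<^sub>R fiber_proj Fib d1 (x + w2)"
    using lift_eq p1_eq p2_eq d s by (simp add: lift_def algebra_simps)
  then have "fiber_proj Fib d1 ?e = 0"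
    using linear_oplane_proj[OF is_oplane_fiber_at[OF skew]]
    by (simp add: fiber_proj_def linear_diff linear_scale)
  moreover have w: "w1 \<in> lin (fst Q) \<inter> (span {x})\<^sup>\<bottom>" "w2 \<in> lin (fst Q) \<inter> (span {x})\<^sup>\<bottom>"
    using p1 p2 p1_eq p2_eq by (auto simp: chart_domain_def chart_space_def)
  then have "?e \<in> lin (fst Q)"
    using x_lin subspace_lin[OF is_oplane_Q] by (simp add: subspace_diff subspace_add subspace_scale)
  moreover have "d1 \<in> ball (snd Q) \<delta>"
    using p1 p1_eq by (simp add: chart_domain_def)
  ultimately have e: "?e = 0"
    using proj_injective by blast
  have "x \<bullet> w1 = 0" "x \<bullet> w2 = 0"
    using w by (auto simp: orthogonal_comp_def orthogonal_def span_base)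
  then have "x \<bullet> ?e = 1 - c"
    using x_unit by (simp add: inner_diff_right inner_add_right dot_square_norm)
  then have "c = 1"
    using e by simp
  then show "p1 = p2"
    using e d s p1_eq p2_eq by simp
qed

lemma ball_subset_chart_image: "\<exists>\<epsilon>>0. ball 0 \<epsilon> \<inter> {q. (x, 0) \<bullet> q = 0} \<subseteq> chart ` chart_domain"
proof -
  have "openin (top_of_set {q. (x, 0) \<bullet> q = 0}) (chart ` chart_domain)"
    using openin_chart_domain subspace_chart_space subspace_hyperplane _ continuous_on_chart _ inj_on_chart
    by (rule invariance_of_domain_subspaces)
       (simp_all add: dim_chart_space dim_hyperplane_x chart_in_hyperplane)
  moreover have "0 \<in> chart ` chart_domain"
    using chart_base by (metis image_eqI)
  ultimately show ?thesis
    unfolding openin_contains_ball by blast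
qed

lemma eventually_mem_alpha:
  fixes as :: "nat \<Rightarrow> 'a \<times> real"
  assumes as: "as \<longlonglongrightarrow> (x, 0)"
  shows "\<forall>\<^sub>F m in sequentially. \<exists>d\<in>cball (snd Q) \<delta>. as m \<in> alpha (fiber_at Fib d)"
proof -
  obtain \<epsilon> where \<epsilon>: "\<epsilon> > 0" "ball 0 \<epsilon> \<inter> {q. (x, 0) \<bullet> q = 0} \<subseteq> chart ` chart_domain"
    using ball_subset_chart_image by blast
  define c where "c m = as m \<bullet> (x, 0)" for m
  define b where "b m = (1 / c m) *\<^sub>R as m - (x, 0)" for m
  have "c \<longlonglongrightarrow> (x, 0 :: real) \<bullet> (x, 0)"
    unfolding c_def by (rule tendsto_inner[OF as tendsto_const])
  then have c: "c \<longlonglongrightarrow> 1"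
    using x_unit by (simp add: dot_square_norm)
  have "b \<longlonglongrightarrow> (1 / 1) *\<^sub>R (x, 0) - (x, 0)"
    unfolding b_def by (intro tendsto_intros c as) simp
  then have "b \<longlonglongrightarrow> 0"
    by simp
  from tendstoD[OF this \<epsilon>(1)] have "\<forall>\<^sub>F m in sequentially. b m \<in> ball 0 \<epsilon>"
    by (simp add: dist_commute)
  moreover have "\<forall>\<^sub>F m in sequentially. 0 < c m"
    using order_tendstoD(1)[OF c, of 0] by simp
  ultimately have "\<forall>\<^sub>F m in sequentially. 0 < c m \<and> b m \<in> ball 0 \<epsilon>"
    by (rule eventually_conj[rotated])
  then show ?thesis
  proof (rule eventually_mono)
    fix m assume m: "0 < c m \<and> b m \<in> ball 0 \<epsilon>"
    have "(x, 0) \<bullet> b m = 0"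
      using m x_unit by (simp add: b_def c_def inner_diff_right inner_commute dot_square_norm)
    then obtain p where p: "p \<in> chart_domain" "b m = chart p"
      using m \<epsilon>(2) by blast
    have "(1 / c m) *\<^sub>R as m = (1 / height p) *\<^sub>R lift p"
      using p(2) by (simp add: b_def chart_def)
    have "as m = c m *\<^sub>R ((1 / c m) *\<^sub>R as m)"
      using m by simp
    also have "\<dots> = (c m / height p) *\<^sub>R lift p"
      using \<open>(1 / c m) *\<^sub>R as m = _\<close> by simp
    finally have "as m = (c m / height p) *\<^sub>R lift p" .
    then have "as m \<in> alpha (fiber_at Fib (fst p))"
      using lift_mem_alpha[of p] by (simp add: alpha_def span_scale)
    moreover have "fst p \<in> cball (snd Q) \<delta>"
      using p(1) by (simp add: chart_domain_def)
    ultimately show "\<exists>d\<in>cball (snd Q) \<delta>. as m \<in> alpha (fiber_at Fib d)"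
      by blast
  qed
qed

end

lemma eventually_fiber_direction_mem_alpha:
  fixes Fib :: "(('k::finite \<Rightarrow> 'a::euclidean_space) set \<times> 'a) set" and as :: "nat \<Rightarrow> 'a \<times> real"
  assumes F: "skew_fibration Fib" and Q: "Q \<in> Fib" and x: "x \<in> lin (fst Q)" "norm x = 1"
    and as: "as \<longlonglongrightarrow> (x, 0)"
  obtains K where "compact K" "\<forall>\<^sub>F m in sequentially. \<exists>d\<in>K. as m \<in> alpha (fiber_at Fib d)"
proof -
  have "\<forall>\<^sub>F d in nhds (snd Q). lin (fst (fiber_at Fib d)) \<inter> (lin (fst Q))\<^sup>\<bottom> = {0}
      \<and> lin (fst Q) \<inter> {e. fiber_proj Fib d e = 0} = {0}"
    using eventually_fiber_transversal[OF F Q] eventually_fiber_proj_injective[OF F Q]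
    by (rule eventually_conj)
  then obtain \<delta> where "\<delta> > 0" and "\<And>d. d \<in> ball (snd Q) \<delta> \<Longrightarrow>
      lin (fst (fiber_at Fib d)) \<inter> (lin (fst Q))\<^sup>\<bottom> = {0} \<and> lin (fst Q) \<inter> {e. fiber_proj Fib d e = 0} = {0}"
    unfolding eventually_nhds_metric by (auto simp: dist_commute)
  then interpret fiber_chart Fib Q x \<delta>
    using F Q x by unfold_locales auto
  show thesis
    using that[OF compact_cball eventually_mem_alpha[OF as]] .
qed

section \<open>Fibers escaping to infinity\<close>

lemma fibers_eventually_avoid_compact:
  fixes Fib :: "(('k::finite \<Rightarrow> 'a::euclidean_space) set \<times> 'a) set"
  assumes F: "skew_fibration Fib" and fib: "\<And>m. (us m, vs m) \<in> Fib"
    and ubar: "is_oplane ubar" "oplane_tendsto us ubar" "ubar \<notin> fst ` Fib" and K: "compact K"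
  shows "\<forall>\<^sub>F m in sequentially. aff (us m, vs m) \<inter> K = {}"
proof (rule ccontr)
  assume "\<not> ?thesis"
  from not_eventually_sequentiallyD[OF this]
  obtain r :: "nat \<Rightarrow> nat" where r: "strict_mono r" and "\<And>j. aff (us (r j), vs (r j)) \<inter> K \<noteq> {}"
    by metis
  then have "\<forall>j. \<exists>z. z \<in> aff (us (r j), vs (r j)) \<and> z \<in> K"
    by blast
  from choice[OF this] obtain d where d: "\<And>j. d j \<in> aff (us (r j), vs (r j))" "\<forall>j. d j \<in> K"
    by blast
  from seq_compactE[OF compact_imp_seq_compact[OF K] d(2)]
  obtain l r' where r': "strict_mono r'" and lim: "(d \<circ> r') \<longlonglongrightarrow> l"
    by blast
  have "oplane_tendsto (\<lambda>j. fst (us (r (r' j)), vs (r (r' j)))) (fst (fiber_at Fib l))"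
    by (rule skew_fibration_tendsto[OF F lim fiber_at[OF F] fib]) (simp add: d(1))
  then have "oplane_tendsto (\<lambda>j. us (r (r' j))) (fst (fiber_at Fib l))"
    by simp
  moreover have "oplane_tendsto (\<lambda>j. us (r (r' j))) ubar"
    using oplane_tendsto_subseq[OF ubar(2) strict_mono_o[OF r r']] by (simp add: o_def)
  moreover have "is_oplane (us m)" for m
    using skew_fibration_fiberD(1)[OF F fib[of m]] by simp
  ultimately have "fst (fiber_at Fib l) = ubar"
    by (intro oplane_tendsto_unique[OF _ is_oplane_fiber_at[OF F] ubar(1)])
  then show False
    using ubar(3) fiber_at(1)[OF F] by force
qed

lemma norm_offset_tendsto_infinity:
  fixes Fib :: "(('k::finite \<Rightarrow> 'a::euclidean_space) set \<times> 'a) set"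
  assumes F: "skew_fibration Fib" and fib: "\<And>m. (us m, vs m) \<in> Fib"
    and ubar: "is_oplane ubar" "oplane_tendsto us ubar" "ubar \<notin> fst ` Fib"
  shows "filterlim (\<lambda>m. norm (vs m)) at_top sequentially"
  unfolding filterlim_at_top
proof
  fix Z :: real
  have "\<forall>\<^sub>F m in sequentially. aff (us m, vs m) \<inter> cball 0 Z = {}"
    by (rule fibers_eventually_avoid_compact[OF F fib ubar compact_cball])
  then show "\<forall>\<^sub>F m in sequentially. Z \<le> norm (vs m)"
  proof (rule eventually_mono)
    fix m assume "aff (us m, vs m) \<inter> cball 0 Z = {}"
    moreover have "vs m \<in> aff (us m, vs m)"
      using snd_mem_aff skew_fibration_fiberD(1)[OF F fib] by (metis snd_conv)
    ultimately show "Z \<le> norm (vs m)"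
      by auto
  qed
qed

lemma grass_limit_horizontal:
  fixes Fib :: "(('k::finite \<Rightarrow> 'a::euclidean_space) set \<times> 'a) set"
  assumes F: "skew_fibration Fib" and fib: "\<And>m. (us m, vs m) \<in> Fib"
    and inf: "filterlim (\<lambda>m. norm (vs m)) at_top sequentially"
    and gt: "grass_tendsto d (\<lambda>m. alpha (us m, vs m)) W"
  shows "W \<subseteq> {p. snd p = 0}"
proof -
  obtain Bs B where Bs: "\<And>m. onb d (Bs m) (alpha (us m, vs m))"
    and B: "onb d B W" and lim: "\<And>i. i < d \<Longrightarrow> (\<lambda>m. Bs m i) \<longlonglongrightarrow> B i"
    using gt unfolding grass_tendsto_def by blast
  have "snd (B i) = 0" if i: "i < d" for i
  proof -
    have bound: "\<bar>snd (Bs m i)\<bar> * norm (vs m) \<le> 1" for m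
    proof -
      have "Bs m i \<in> alpha (us m, vs m)"
        using Bs[of m] i unfolding onb_def by (metis imageI lessThan_iff span_base)
      then obtain y t where yt: "Bs m i = (y + t *\<^sub>R vs m, t)" "y \<in> lin (us m)"
        using alpha_eq[OF skew_fibration_fiberD(1)[OF F fib[of m]]] by auto
      have "y \<bullet> vs m = 0"
        using skew_fibration_fiberD(2)[OF F fib[of m]] yt(2) by (simp add: inner_commute)
      then have "\<bar>t\<bar> * norm (vs m) \<le> norm (Bs m i)"
        unfolding yt(1) by (rule abs_mult_norm_le_norm_Pair)
      moreover have "norm (Bs m i) = 1"
        using Bs[of m] i by (simp add: onb_def norm_eq_1)
      ultimately show ?thesis
        using yt(1) by simp
    qed
    have "\<forall>\<^sub>F m in sequentially. norm (snd (Bs m i)) \<le> inverse (norm (vs m))"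
      using inf[unfolded filterlim_at_top, rule_format, of 1]
    proof eventually_elim
      case (elim m)
      then have "0 < norm (vs m)"
        by linarith
      then show ?case
        using bound[of m] by (simp add: pos_le_divide_eq mult.commute inverse_eq_divide)
    qed
    then have "(\<lambda>m. snd (Bs m i)) \<longlonglongrightarrow> 0"
      by (rule Lim_null_comparison[OF _ tendsto_inverse_0_at_top[OF inf]])
    moreover have "(\<lambda>m. snd (Bs m i)) \<longlonglongrightarrow> snd (B i)"
      using lim[OF i] by (rule tendsto_snd)
    ultimately show ?thesis
      using LIMSEQ_unique by metis
  qed
  then have "span (B ` {..<d}) \<subseteq> {p. snd p = 0}"
    by (intro span_minimal) (auto simp: subspace_def)
  then show ?thesis
    using B by (simp add: onb_def)
qed

lemma grass_tendsto_approx: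
  assumes gt: "grass_tendsto d Ws W" and y: "y \<in> W"
  obtains as where "\<And>m. as m \<in> Ws m" "as \<longlonglongrightarrow> y"
proof -
  obtain Bs B where Bs: "\<And>m. onb d (Bs m) (Ws m)"
    and B: "onb d B W" and lim: "\<And>i. i < d \<Longrightarrow> (\<lambda>m. Bs m i) \<longlonglongrightarrow> B i"
    using gt unfolding grass_tendsto_def by blast
  define as where "as m = (\<Sum>i<d. (y \<bullet> B i) *\<^sub>R Bs m i)" for m
  have "as m \<in> Ws m" for m
  proof -
    have "as m \<in> span (Bs m ` {..<d})"
      unfolding as_def by (intro span_sum span_scale span_base) auto
    then show ?thesis
      using Bs[of m] by (simp add: onb_iff)
  qed
  moreover have "as \<longlonglongrightarrow> (\<Sum>i<d. (y \<bullet> B i) *\<^sub>R B i)"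
    unfolding as_def by (intro tendsto_sum tendsto_scaleR tendsto_const lim) simp
  moreover have "(\<Sum>i<d. (y \<bullet> B i) *\<^sub>R B i) = y"
    using orthonormal_span_eq_sum[OF finite_lessThan, where B = B and y = y] B y by (simp add: onb_iff)
  ultimately show thesis
    using that by auto
qed

lemma fiber_direction_not_limit:
  fixes Fib :: "(('k::finite \<Rightarrow> 'a::euclidean_space) set \<times> 'a) set" and as :: "nat \<Rightarrow> 'a \<times> real"
  assumes F: "skew_fibration Fib" and fib: "\<And>m. (us m, vs m) \<in> Fib"
    and ubar: "is_oplane ubar" "oplane_tendsto us ubar" "ubar \<notin> fst ` Fib"
    and Q: "Q \<in> Fib" and x: "x \<in> lin (fst Q)" "norm x = 1"
    and as: "\<And>m. as m \<in> alpha (us m, vs m)" "as \<longlonglongrightarrow> (x, 0)"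
  shows False
proof -
  obtain K where K: "compact K" "\<forall>\<^sub>F m in sequentially. \<exists>d\<in>K. as m \<in> alpha (fiber_at Fib d)"
    using eventually_fiber_direction_mem_alpha[OF F Q x as(2)] .
  have "(x, 0) \<noteq> (0 :: 'a \<times> real)"
    using x(2) by (auto simp: zero_prod_def)
  from tendsto_imp_eventually_ne[OF as(2) this]
  have "\<forall>\<^sub>F m in sequentially. as m \<noteq> 0" .
  with K(2) have "\<forall>\<^sub>F m in sequentially. aff (us m, vs m) \<inter> K \<noteq> {}"
  proof eventually_elim
    case (elim m)
    then obtain d where d: "d \<in> K" "as m \<in> alpha (fiber_at Fib d)"
      by blast
    have "fiber_at Fib d = (us m, vs m)"
      by (rule skew_fibration_alpha_unique[OF F fiber_at(1)[OF F] fib d(2) as(1) elim(2)])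
    then have "d \<in> aff (us m, vs m)"
      using fiber_at(2)[OF F, of d] by simp
    then show ?case
      using d(1) by blast
  qed
  from eventually_conj[OF fibers_eventually_avoid_compact[OF F fib ubar K(1)] this]
  have "\<forall>\<^sub>F m in sequentially. False"
    by (rule eventually_mono) auto
  then show False
    by simp
qed

theorem lemma5p2:
  fixes Fib :: "(('k::finite \<Rightarrow> real^'n) set \<times> (real^'n)) set"
    and us :: "nat \<Rightarrow> ('k \<Rightarrow> real^'n) set" and vs :: "nat \<Rightarrow> real^'n"
    and ubar :: "('k \<Rightarrow> real^'n) set"
    and W :: "((real^'n) \<times> real) set" and S :: "((real^'n) \<times> real) set"
  assumes "skew_fibration Fib"
    and "\<forall>m. (us m, vs m) \<in> Fib"
    and "is_oplane ubar" and "oplane_tendsto us ubar" and "ubar \<notin> fst ` Fib"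
    and "subspace W" and "S = sphere 0 1 \<inter> W"
    and "grass_tendsto (CARD('k) + 1) (\<lambda>m. alpha (us m, vs m)) W"
  shows "S \<subseteq> equator
    \<and> S \<inter> (\<lambda>x. (x, 0)) ` (\<Union>u\<in>fst ` Fib. lin u \<inter> sphere 0 1) = {}"
proof -
  have fib: "\<And>m. (us m, vs m) \<in> Fib"
    using assms(2) by blast
  have "W \<subseteq> {p. snd p = 0}"
    using grass_limit_horizontal[OF assms(1) fib norm_offset_tendsto_infinity[OF assms(1) fib assms(3-5)]
        assms(8)] .
  then have "S \<subseteq> equator"
    using assms(7) by (auto simp: equator_def)
  moreover have False if "(x, 0) \<in> S" "Q \<in> Fib" "x \<in> lin (fst Q)" "norm x = 1" for x Q
  proof -
    have "(x, 0) \<in> W"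
      using that(1) assms(7) by blast
    then obtain as where "\<And>m. as m \<in> alpha (us m, vs m)" "as \<longlonglongrightarrow> (x, 0)"
      using grass_tendsto_approx[OF assms(8)] by blast
    then show False
      by (rule fiber_direction_not_limit[OF assms(1) fib assms(3-5) that(2-4)])
  qed
  ultimately show ?thesis
    by fastforce
qed

end
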